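(* Let $v \sim \mathcal{N}(0, I_d)$, $p \ge 1$ and $r > 0$ with $r^2 \ge d$. Then $$\mathbb{E}[\|v\|^p \mid \|v\|^2 \ge r^2] \le (2r)^p + 4(d + 2p)^{p/2} \exp(-r^2/8).$$
   Context: $\|\cdot\|$ is the Euclidean norm; the expectation is conditional on the event $\{\|v\|^2\ge r^2\}$. *)

theory Defs
  imports "HOL-Probability.Probability"
begin

definition std_gauss_density :: "'a::euclidean_space \<Rightarrow> real" where
  "std_gauss_density x = (2 * pi) powr (- real DIM('a) / 2) * exp (- (norm x)\<^sup>2 / 2)"

definition std_gauss :: "'a::euclidean_space measure" where
  "std_gauss = density lborel (\<lambda>x. ennreal (std_gauss_density x))"

definition cond_exp_event :: "'a measure \<Rightarrow> 'a set \<Rightarrow> ('a \<Rightarrow> real) \<Rightarrow> real" where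
  "cond_exp_event M A f = (\<integral>x\<in>A. f x \<partial>M) / measure M A"

end

theory Submission
  imports Defs
begin

text \<open>
  Split the event \<open>\<parallel>v\<parallel> \<ge> r\<close> at \<open>\<parallel>v\<parallel> = 2r\<close>. Below the split \<open>\<parallel>v\<parallel>^p \<le> (2r)^p\<close>. Above it,
  substitute \<open>v = 2w\<close>: the Jacobian is \<open>2^d\<close> and the Gaussian density satisfies
  \<open>\<phi>(2w) = \<phi>(w) exp(-3\<parallel>w\<parallel>\<^sup>2/2)\<close>, so the far tail is the integral against \<open>\<phi>\<close> over \<open>\<parallel>w\<parallel> > r\<close>
  of the weight \<open>2^d (2\<parallel>w\<parallel>)^p exp(-3\<parallel>w\<parallel>\<^sup>2/2)\<close>, and this weight is at most
  \<open>(d + 2p)^(p/2) exp(-r\<^sup>2/8)\<close> because \<open>d \<le> r\<^sup>2 \<le> \<parallel>w\<parallel>\<^sup>2\<close>. So the conditional moment is even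
  bounded by \<open>(2r)^p + (d + 2p)^(p/2) exp(-r\<^sup>2/8)\<close>, without the factor 4.
\<close>

lemma two_mul_le_exp:
  fixes t :: real
  shows "2 * t \<le> exp t"
proof (cases "t \<ge> 0")
  case True
  have "2 * t \<le> 1 + t + t\<^sup>2 / 2"
    using zero_le_power2[of "t - 1"] by (simp add: power2_eq_square field_simps)
  also have "\<dots> \<le> exp t"
    using exp_lower_Taylor_quadratic[OF True] .
  finally show ?thesis .
next
  case False
  then show ?thesis
    using exp_gt_zero[of t] by linarith
qed

lemma two_powr_le_exp:
  fixes d :: real
  assumes "d \<ge> 0"
  shows "2 powr d \<le> exp (3/4 * d)"
proof -
  have "2 \<le> exp (3/4 :: real)"
    using exp_lower_Taylor_quadratic[of "3/4 :: real"] by (simp add: power2_eq_square)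
  then have "ln 2 \<le> (3/4 :: real)"
    by (metis exp_gt_zero ln_exp ln_le_cancel_iff zero_less_numeral)
  then have "d * ln 2 \<le> 3/4 * d"
    using mult_left_mono[of "ln 2" "3/4" d] assms by linarith
  then show ?thesis
    by (simp add: powr_def)
qed

lemma powr_mul_exp_neg_square_le:
  fixes p s :: real
  assumes "p > 0" and "s \<ge> 0"
  shows "(2 * s) powr p * exp (- s\<^sup>2 / 2) \<le> (2 * p) powr (p / 2)"
proof -
  define t where "t = s\<^sup>2 / p"
  have "(2 * s) powr p = ((2 * s) powr 2) powr (p / 2)"
    by (simp add: powr_powr)
  also have "(2 * s) powr 2 = 4 * s\<^sup>2"
    using assms(2) by (simp add: power_mult_distrib)
  finally have "(2 * s) powr p = (4 * s\<^sup>2) powr (p / 2)" .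
  moreover have "exp (- s\<^sup>2 / 2) = exp (- t) powr (p / 2)"
    using assms(1) by (simp add: t_def powr_def)
  ultimately have "(2 * s) powr p * exp (- s\<^sup>2 / 2) = (4 * s\<^sup>2 * exp (- t)) powr (p / 2)"
    by (simp add: powr_mult)
  also have "\<dots> \<le> (2 * p) powr (p / 2)"
  proof (rule powr_mono2)
    have "4 * s\<^sup>2 = 2 * p * (2 * t)"
      using assms(1) by (simp add: t_def)
    also have "\<dots> \<le> 2 * p * exp t"
      using assms(1) two_mul_le_exp[of t] by simp
    finally show "4 * s\<^sup>2 * exp (- t) \<le> 2 * p"
      by (simp add: exp_minus field_simps)
  qed (use assms(1) in auto)
  finally show ?thesis .
qed

lemma gauss_tail_weight_le:
  fixes d p r s :: real
  assumes "p > 0" and "0 \<le> d" "d \<le> r\<^sup>2" and "0 \<le> r" "r \<le> s"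
  shows "2 powr d * (2 * s) powr p * exp (- 3 * s\<^sup>2 / 2) \<le> (d + 2 * p) powr (p / 2) * exp (- r\<^sup>2 / 8)"
proof -
  have rs: "r\<^sup>2 \<le> s\<^sup>2"
    using assms(4,5) by (simp add: power_mono)
  have "2 powr d \<le> exp (3/4 * d)"
    using two_powr_le_exp[OF assms(2)] .
  also have "\<dots> \<le> exp (3/4 * s\<^sup>2)"
    using assms(3) rs by simp
  finally have "2 powr d \<le> exp (3/4 * s\<^sup>2)" .
  then have "2 powr d * (2 * s) powr p * exp (- 3 * s\<^sup>2 / 2)
      \<le> exp (3/4 * s\<^sup>2) * (2 * s) powr p * exp (- 3 * s\<^sup>2 / 2)"
    by (intro mult_right_mono) auto
  also have "\<dots> = ((2 * s) powr p * exp (- s\<^sup>2 / 2)) * exp (- s\<^sup>2 / 4)"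
    by (simp add: exp_add[symmetric])
  also have "\<dots> \<le> (d + 2 * p) powr (p / 2) * exp (- r\<^sup>2 / 8)"
  proof (intro mult_mono)
    have "(2 * s) powr p * exp (- s\<^sup>2 / 2) \<le> (2 * p) powr (p / 2)"
      using powr_mul_exp_neg_square_le assms by simp
    also have "\<dots> \<le> (d + 2 * p) powr (p / 2)"
      using assms by (intro powr_mono2) auto
    finally show "(2 * s) powr p * exp (- s\<^sup>2 / 2) \<le> (d + 2 * p) powr (p / 2)" .
    show "exp (- s\<^sup>2 / 4) \<le> exp (- r\<^sup>2 / 8)"
    proof -
      have "r\<^sup>2 \<le> 2 * s\<^sup>2"
        using rs zero_le_power2[of s] by linarith
      then show ?thesis by simp
    qed
  qed auto
  finally show ?thesis .
qed

lemma std_gauss_density_nonneg: "0 \<le> std_gauss_density x"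
  by (simp add: std_gauss_density_def)

lemma borel_measurable_std_gauss_density [measurable]:
  "(std_gauss_density :: 'a::euclidean_space \<Rightarrow> real) \<in> borel_measurable borel"
  unfolding std_gauss_density_def[abs_def] by measurable

lemma sets_std_gauss [simp, measurable_cong]: "sets std_gauss = sets borel"
  by (simp add: std_gauss_def)

lemma nn_integral_std_gauss:
  assumes "f \<in> borel_measurable borel"
  shows "(\<integral>\<^sup>+x. f x \<partial>std_gauss) = (\<integral>\<^sup>+x. ennreal (std_gauss_density x) * f x \<partial>lborel)"
  using assms unfolding std_gauss_def by (simp add: nn_integral_density)

lemma std_gauss_density_scaleR:
  "std_gauss_density (c *\<^sub>R x) = std_gauss_density x * exp (- (c\<^sup>2 - 1) * (norm x)\<^sup>2 / 2)"
  by (simp add: std_gauss_density_def power_mult_distrib exp_add[symmetric] algebra_simps)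

lemma nn_integral_lborel_affine:
  fixes t :: "'a::euclidean_space"
  assumes "f \<in> borel_measurable borel" and "c \<noteq> 0"
  shows "(\<integral>\<^sup>+x. f x \<partial>lborel) = ennreal (\<bar>c\<bar> ^ DIM('a)) * (\<integral>\<^sup>+x. f (t + c *\<^sub>R x) \<partial>lborel)"
  using assms
  by (subst lborel_affine[OF assms(2), of t]) (simp add: nn_integral_density nn_integral_distr nn_integral_cmult)

lemma nn_integral_std_gauss_scaleR:
  fixes f :: "'a::euclidean_space \<Rightarrow> ennreal"
  assumes f [measurable]: "f \<in> borel_measurable borel" and "c \<noteq> 0"
  shows "(\<integral>\<^sup>+x. f x \<partial>std_gauss)
    = (\<integral>\<^sup>+x. ennreal (\<bar>c\<bar> ^ DIM('a) * exp (- (c\<^sup>2 - 1) * (norm x)\<^sup>2 / 2)) * f (c *\<^sub>R x) \<partial>std_gauss)"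
proof -
  have "(\<integral>\<^sup>+x. f x \<partial>std_gauss) = (\<integral>\<^sup>+x. ennreal (std_gauss_density x) * f x \<partial>lborel)"
    by (simp add: nn_integral_std_gauss)
  also have "\<dots> = ennreal (\<bar>c\<bar> ^ DIM('a))
      * (\<integral>\<^sup>+x. ennreal (std_gauss_density (c *\<^sub>R x)) * f (c *\<^sub>R x) \<partial>lborel)"
    using nn_integral_lborel_affine[of "\<lambda>x. ennreal (std_gauss_density x) * f x" c 0] assms
    by simp
  also have "\<dots> = (\<integral>\<^sup>+x. ennreal (std_gauss_density x)
      * (ennreal (\<bar>c\<bar> ^ DIM('a) * exp (- (c\<^sup>2 - 1) * (norm x)\<^sup>2 / 2)) * f (c *\<^sub>R x)) \<partial>lborel)"
    by (subst nn_integral_cmult[symmetric])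
       (auto intro!: nn_integral_cong simp: std_gauss_density_scaleR std_gauss_density_nonneg ennreal_mult ac_simps)
  also have "\<dots> = (\<integral>\<^sup>+x. ennreal (\<bar>c\<bar> ^ DIM('a) * exp (- (c\<^sup>2 - 1) * (norm x)\<^sup>2 / 2)) * f (c *\<^sub>R x) \<partial>std_gauss)"
    by (simp add: nn_integral_std_gauss)
  finally show ?thesis .
qed

lemma std_gauss_far_tail_moment_le:
  fixes p r :: real
  assumes "p > 0" and "0 \<le> r" and "real DIM('a) \<le> r\<^sup>2"
  shows "(\<integral>\<^sup>+x\<in>{v::'a::euclidean_space. 2 * r < norm v}. ennreal (norm x powr p) \<partial>std_gauss)
    \<le> ennreal ((real DIM('a) + 2 * p) powr (p / 2) * exp (- r\<^sup>2 / 8))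
      * emeasure std_gauss {v::'a. r \<le> norm v}"
  (is "_ \<le> ennreal ?K * _")
proof -
  let ?d = "real DIM('a)"
  let ?A = "{v::'a. r \<le> norm v}" and ?B = "{v::'a. 2 * r < norm v}"
  have "(\<integral>\<^sup>+x\<in>?B. ennreal (norm x powr p) \<partial>std_gauss)
      = (\<integral>\<^sup>+x. ennreal (\<bar>2\<bar> ^ DIM('a) * exp (- (2\<^sup>2 - 1) * (norm x)\<^sup>2 / 2))
          * (ennreal (norm (2 *\<^sub>R x) powr p) * indicator ?B (2 *\<^sub>R x)) \<partial>std_gauss)"
    by (rule nn_integral_std_gauss_scaleR) simp_all
  also have "\<dots> \<le> (\<integral>\<^sup>+x. ennreal ?K * indicator ?A x \<partial>std_gauss)"
  proof (intro nn_integral_mono)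
    fix x :: 'a
    show "ennreal (\<bar>2\<bar> ^ DIM('a) * exp (- (2\<^sup>2 - 1) * (norm x)\<^sup>2 / 2))
          * (ennreal (norm (2 *\<^sub>R x) powr p) * indicator ?B (2 *\<^sub>R x))
        \<le> ennreal ?K * indicator ?A x"
    proof (cases "r < norm x")
      case True
      have "2 powr ?d * (2 * norm x) powr p * exp (- 3 * (norm x)\<^sup>2 / 2) \<le> ?K"
        using gauss_tail_weight_le[of p ?d r "norm x"] assms True by simp
      with True show ?thesis
        by (simp add: powr_realpow ennreal_mult[symmetric] ennreal_leI mult_ac)
    qed simp
  qed
  also have "\<dots> = ennreal ?K * emeasure std_gauss ?A"
    by (simp add: nn_integral_cmult_indicator)
  finally show ?thesis .
qed

lemma std_gauss_tail_moment_le: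
  fixes p r :: real
  assumes "p > 0" and "0 \<le> r" and "real DIM('a) \<le> r\<^sup>2"
  shows "(\<integral>\<^sup>+x\<in>{v::'a::euclidean_space. r \<le> norm v}. ennreal (norm x powr p) \<partial>std_gauss)
    \<le> ennreal ((2 * r) powr p + (real DIM('a) + 2 * p) powr (p / 2) * exp (- r\<^sup>2 / 8))
      * emeasure std_gauss {v::'a. r \<le> norm v}"
  (is "_ \<le> ennreal (?c + ?K) * _")
proof -
  let ?A = "{v::'a. r \<le> norm v}" and ?B = "{v::'a. 2 * r < norm v}"
  have "(\<integral>\<^sup>+x\<in>?A. ennreal (norm x powr p) \<partial>std_gauss)
      \<le> (\<integral>\<^sup>+x. ennreal ?c * indicator ?A x + ennreal (norm x powr p) * indicator ?B x \<partial>std_gauss)"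
  proof (intro nn_integral_mono)
    fix x :: 'a
    have "norm x \<le> 2 * r \<Longrightarrow> norm x powr p \<le> ?c"
      using assms(1) by (intro powr_mono2) auto
    then show "ennreal (norm x powr p) * indicator ?A x
        \<le> ennreal ?c * indicator ?A x + ennreal (norm x powr p) * indicator ?B x"
      by (cases "norm x \<le> 2 * r") (auto simp: indicator_def ennreal_leI)
  qed
  also have "\<dots> = ennreal ?c * emeasure std_gauss ?A
      + (\<integral>\<^sup>+x\<in>?B. ennreal (norm x powr p) \<partial>std_gauss)"
    by (simp add: nn_integral_add nn_integral_cmult_indicator)
  also have "\<dots> \<le> ennreal ?c * emeasure std_gauss ?A + ennreal ?K * emeasure std_gauss ?A"
    using std_gauss_far_tail_moment_le[OF assms] by (rule add_left_mono)
  also have "\<dots> = ennreal (?c + ?K) * emeasure std_gauss ?A"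
    by (simp add: distrib_right ennreal_plus)
  finally show ?thesis .
qed

lemma cond_exp_event_le:
  fixes C :: real
  assumes "A \<in> sets M" and "f \<in> borel_measurable M" and "\<And>x. x \<in> A \<Longrightarrow> 0 \<le> f x" and "0 \<le> C"
    and "(\<integral>\<^sup>+x\<in>A. ennreal (f x) \<partial>M) \<le> ennreal C * emeasure M A"
  shows "cond_exp_event M A f \<le> C"
proof (cases "measure M A = 0")
  case True
  then show ?thesis
    using assms(4) by (simp add: cond_exp_event_def)
next
  case False
  then have "emeasure M A \<noteq> \<infinity>"
    by (auto simp: measure_def)
  then have emeasure_A: "emeasure M A = ennreal (measure M A)"
    by (simp add: emeasure_eq_ennreal_measure)
  have "(\<integral>x\<in>A. f x \<partial>M) = enn2real (\<integral>\<^sup>+x. ennreal (indicator A x *\<^sub>R f x) \<partial>M)"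
    unfolding set_lebesgue_integral_def
    using assms(1-3) by (intro integral_eq_nn_integral) (auto simp: indicator_def)
  also have "(\<integral>\<^sup>+x. ennreal (indicator A x *\<^sub>R f x) \<partial>M) = (\<integral>\<^sup>+x\<in>A. ennreal (f x) \<partial>M)"
    by (intro nn_integral_cong) (simp add: indicator_def)
  also have "enn2real \<dots> \<le> enn2real (ennreal C * emeasure M A)"
    using assms(4,5) emeasure_A by (intro enn2real_mono) (auto simp: ennreal_mult[symmetric])
  also have "\<dots> = C * measure M A"
    using assms(4) by (simp add: emeasure_A enn2real_mult)
  finally have "(\<integral>x\<in>A. f x \<partial>M) \<le> C * measure M A" .
  moreover have "measure M A > 0"
    using False measure_nonneg[of M A] by linarith
  ultimately show ?thesis
    by (simp add: cond_exp_event_def pos_divide_le_eq)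
qed

theorem lemmaA8:
  fixes p r :: real
  assumes "p \<ge> 1" and "r > 0" and "r\<^sup>2 \<ge> real DIM('a::euclidean_space)"
  shows "cond_exp_event (std_gauss :: 'a measure) {v. (norm v)\<^sup>2 \<ge> r\<^sup>2} (\<lambda>v. norm v powr p)
           \<le> (2 * r) powr p + 4 * (real DIM('a) + 2 * p) powr (p / 2) * exp (- r\<^sup>2 / 8)"
proof -
  let ?K = "(real DIM('a) + 2 * p) powr (p / 2) * exp (- r\<^sup>2 / 8)"
  have tail_event: "{v::'a. (norm v)\<^sup>2 \<ge> r\<^sup>2} = {v. r \<le> norm v}"
    using assms(2) by (auto simp: abs_le_square_iff[symmetric])
  have "cond_exp_event (std_gauss :: 'a measure) {v. r \<le> norm v} (\<lambda>v. norm v powr p)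
      \<le> (2 * r) powr p + ?K"
    using assms std_gauss_tail_moment_le[of p r] by (intro cond_exp_event_le) auto
  also have "\<dots> \<le> (2 * r) powr p + 4 * (real DIM('a) + 2 * p) powr (p / 2) * exp (- r\<^sup>2 / 8)"
    by simp
  finally show ?thesis
    unfolding tail_event .
qed

end
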